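(* Let $W\in\mathbb{R}^{a\times b}$ with columns $w_1,\dots,w_b$, and let $\sigma:\mathbb{R}\to\mathbb{R}$ be positive-homogeneous ($\sigma(\alpha t)=\alpha\sigma(t)$ for all $\alpha\ge0$, $t\in\mathbb{R}$) and not identically zero. Let $z\sim\mathcal N(0,I_a)$. For each neuron $j$ define the activity score \[ s_j=\frac{\mathbb{E}_z[|\sigma(\langle z,w_j\rangle)|]}{\frac1b\sum_{k=1}^b\mathbb{E}_z[|\sigma(\langle z,w_k\rangle)|]}. \] If $\varepsilon:=\sqrt{\mathrm{DfI}(W)}<1$, then for all $j$, \[ \sqrt{\frac{1-\varepsilon}{1+\varepsilon}}\le s_j\le\sqrt{\frac{1+\varepsilon}{1-\varepsilon}}. \]
   Context: $\mathrm{DfI}(W)=\|W^\top W-I\|_F^2$ (Deviation from Isometry), with $\|\cdot\|_F$ the Frobenius norm. *)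

theory Defs
  imports "HOL-Probability.Probability"
begin

definition std_gaussian :: "(real ^ 'a) measure" where
  "std_gaussian = density lborel (\<lambda>z. ennreal (\<Prod>i\<in>UNIV. std_normal_density (z $ i)))"

definition frob_norm :: "real ^ 'b ^ 'a \<Rightarrow> real" where
  "frob_norm M = sqrt (\<Sum>i\<in>UNIV. \<Sum>j\<in>UNIV. (M $ i $ j)\<^sup>2)"

definition DfI :: "real ^ 'b ^ 'a \<Rightarrow> real" where
  "DfI W = (frob_norm (transpose W ** W - mat 1))\<^sup>2"

definition exp_act :: "(real \<Rightarrow> real) \<Rightarrow> real ^ 'b ^ 'a \<Rightarrow> 'b \<Rightarrow> real" where
  "exp_act \<sigma> W j = (\<integral>z. \<bar>\<sigma> (z \<bullet> column j W)\<bar> \<partial>std_gaussian)"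

definition activity_score :: "(real \<Rightarrow> real) \<Rightarrow> real ^ 'b ^ 'a \<Rightarrow> 'b \<Rightarrow> real" where
  "activity_score \<sigma> W j =
     exp_act \<sigma> W j / ((1 / real CARD('b)) * (\<Sum>k\<in>UNIV. exp_act \<sigma> W k))"

end

theory Submission
  imports Defs
begin

text \<open>Under the standard Gaussian, \<open>\<langle>z, w\<rangle>\<close> is normal with standard deviation \<open>\<parallel>w\<parallel>\<close>, so
  positive homogeneity gives \<open>E |\<sigma>(\<langle>z, w\<rangle>)| = \<parallel>w\<parallel> E |\<sigma>(g)|\<close> with \<open>g ~ N(0,1)\<close>, and
  \<open>E |\<sigma>(g)| = (|\<sigma>(1)| + |\<sigma>(-1)|) / \<surd>(2\<pi>) > 0\<close>. Hence the activity score of neuron \<open>j\<close> is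
  \<open>\<parallel>w\<^sub>j\<parallel>\<close> divided by the mean column norm. The diagonal entries of \<open>W\<^sup>T W - I\<close> are
  \<open>\<parallel>w\<^sub>k\<parallel>\<^sup>2 - 1\<close> and are bounded by its Frobenius norm \<open>\<epsilon>\<close>, so every column norm lies in
  \<open>[\<surd>(1 - \<epsilon>), \<surd>(1 + \<epsilon>)]\<close>, and so does the mean.\<close>

definition positively_homogeneous :: "(real \<Rightarrow> real) \<Rightarrow> bool" where
  "positively_homogeneous h \<longleftrightarrow> (\<forall>\<alpha> t. \<alpha> \<ge> 0 \<longrightarrow> h (\<alpha> * t) = \<alpha> * h t)"

lemma positively_homogeneous_eq:
  assumes "positively_homogeneous h"
  shows "h u = h 1 * ((u + \<bar>u\<bar>) / 2) + h (-1) * ((\<bar>u\<bar> - u) / 2)"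
proof (cases "u \<ge> 0")
  case True
  then have "h u = u * h 1"
    using assms[unfolded positively_homogeneous_def, rule_format, of u 1] by simp
  with True show ?thesis by simp
next
  case False
  then have "h u = - u * h (-1)"
    using assms[unfolded positively_homogeneous_def, rule_format, of "-u" "-1"] by simp
  with False show ?thesis by simp
qed

lemma positively_homogeneous_zero:
  "positively_homogeneous h \<Longrightarrow> h 0 = 0"
  using positively_homogeneous_eq[of h 0] by simp

lemma positively_homogeneous_abs:
  "positively_homogeneous h \<Longrightarrow> positively_homogeneous (\<lambda>u. \<bar>h u\<bar>)"
  by (simp add: positively_homogeneous_def abs_mult)

lemma borel_measurable_positively_homogeneous:
  assumes "positively_homogeneous h"
  shows "h \<in> borel_measurable borel"
proof -
  have "(\<lambda>u. h 1 * ((u + \<bar>u\<bar>) / 2) + h (-1) * ((\<bar>u\<bar> - u) / 2)) \<in> borel_measurable borel"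
    by measurable
  moreover have "(\<lambda>u. h 1 * ((u + \<bar>u\<bar>) / 2) + h (-1) * ((\<bar>u\<bar> - u) / 2)) = h"
    by (rule ext) (rule positively_homogeneous_eq[OF assms, symmetric])
  ultimately show ?thesis by (simp only:)
qed

lemma positively_homogeneous_nonzero:
  assumes "positively_homogeneous h" and "\<exists>t. h t \<noteq> 0"
  shows "h 1 \<noteq> 0 \<or> h (-1) \<noteq> 0"
proof -
  obtain t where "h t \<noteq> 0" using assms(2) by blast
  then show ?thesis
    using positively_homogeneous_eq[OF assms(1), of t] by (metis mult_zero_left add_0)
qed

lemma measurable_vec_lambda_PiM:
  assumes "sets M = sets borel"
  shows "(\<lambda>x. \<chi> i. x i) \<in> measurable (PiM (UNIV :: 'n::finite set) (\<lambda>_. M)) (borel :: (real ^ 'n) measure)"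
proof (rule borel_measurable_euclidean_space[THEN iffD2], intro ballI)
  fix b :: "real ^ 'n" assume "b \<in> Basis"
  then obtain j where b: "b = axis j 1" by (auto simp: Basis_vec_def)
  have "(\<lambda>x. x j) \<in> measurable (PiM (UNIV :: 'n set) (\<lambda>_. M)) M"
    by (rule measurable_component_singleton) simp
  then have "(\<lambda>x. x j) \<in> borel_measurable (PiM (UNIV :: 'n set) (\<lambda>_. M))"
    by (simp add: measurable_cong_sets[OF refl assms])
  then show "(\<lambda>x. (\<chi> i. x i) \<bullet> b) \<in> borel_measurable (PiM UNIV (\<lambda>_. M))"
    by (simp add: b inner_axis)
qed

lemma lborel_vec_eq_distr_PiM:
  "(lborel :: (real ^ 'n::finite) measure) = distr (PiM UNIV (\<lambda>_. lborel)) borel (\<lambda>x. \<chi> i. x i)"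
proof (rule lborel_eqI)
  fix l u :: "real ^ 'n" assume le: "\<And>b. b \<in> Basis \<Longrightarrow> l \<bullet> b \<le> u \<bullet> b"
  then have le': "l $ i \<le> u $ i" for i
    using le[of "axis i 1"] by (auto simp: Basis_vec_def inner_axis)
  interpret product_sigma_finite "\<lambda>_::'n. lborel" by standard
  have preimage: "(\<lambda>x. \<chi> i. x i) -` box l u \<inter> space (PiM UNIV (\<lambda>_::'n. lborel))
      = PiE UNIV (\<lambda>i. {l $ i <..< u $ i})"
    by (auto simp: mem_box_cart space_PiM PiE_def extensional_def Pi_iff)
  have "emeasure (distr (PiM UNIV (\<lambda>_. lborel)) borel (\<lambda>x. \<chi> i. x i)) (box l u)
      = emeasure (PiM UNIV (\<lambda>_::'n. lborel)) (PiE UNIV (\<lambda>i. {l $ i <..< u $ i}))"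
    by (subst emeasure_distr[OF measurable_vec_lambda_PiM]) (auto simp: preimage)
  also have "\<dots> = ennreal (\<Prod>i\<in>UNIV. u $ i - l $ i)"
    by (subst emeasure_PiM) (auto simp: le' prod_ennreal)
  also have "(\<Prod>i\<in>UNIV. u $ i - l $ i) = (\<Prod>b\<in>Basis. (u - l) \<bullet> b)"
    by (simp add: Basis_vec_def UNION_singleton_eq_range prod.reindex inj_on_def axis_eq_axis inner_axis)
  finally show "emeasure (distr (PiM UNIV (\<lambda>_. lborel)) borel (\<lambda>x. \<chi> i. x i)) (box l u)
      = (\<Prod>b\<in>Basis. (u - l) \<bullet> b)" .
qed simp

abbreviation std_normal_measure :: "real measure" where
  "std_normal_measure \<equiv> density lborel (\<lambda>x. ennreal (std_normal_density x))"

lemma prob_space_std_normal_measure: "prob_space std_normal_measure"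
  by (rule prob_space_normal_density) simp

lemma density_PiM_lborel_eq_PiM_std_normal:
  "density (PiM (UNIV :: 'n::finite set) (\<lambda>_. lborel)) (\<lambda>x. \<Prod>i\<in>UNIV. ennreal (std_normal_density (x i)))
     = PiM UNIV (\<lambda>_. std_normal_measure)"
proof -
  interpret N: prob_space std_normal_measure by (rule prob_space_std_normal_measure)
  interpret PN: product_sigma_finite "\<lambda>_::'n. std_normal_measure" by standard
  interpret PL: product_sigma_finite "\<lambda>_::'n. lborel" by standard
  show ?thesis
  proof (rule PN.PiM_eqI)
    show "sets (density (PiM (UNIV :: 'n set) (\<lambda>_. lborel)) (\<lambda>x. \<Prod>i\<in>UNIV. ennreal (std_normal_density (x i))))
        = sets (PiM UNIV (\<lambda>_. std_normal_measure))"
      by (simp only: sets_density) (rule sets_PiM_cong; simp)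
    fix A :: "'n \<Rightarrow> real set" assume "\<And>i. i \<in> UNIV \<Longrightarrow> A i \<in> sets std_normal_measure"
    then have A: "A i \<in> sets borel" for i by simp
    have "emeasure (density (PiM UNIV (\<lambda>_. lborel)) (\<lambda>x. \<Prod>i\<in>UNIV. ennreal (std_normal_density (x i))))
        (PiE UNIV A)
      = (\<integral>\<^sup>+x. (\<Prod>i\<in>UNIV. ennreal (std_normal_density (x i))) * indicator (PiE UNIV A) x
          \<partial>PiM UNIV (\<lambda>_. lborel))"
      using A by (subst emeasure_density) (auto intro!: sets_PiM_I_finite)
    also have "\<dots> = (\<integral>\<^sup>+x. (\<Prod>i\<in>UNIV. ennreal (std_normal_density (x i)) * indicator (A i) (x i))
        \<partial>PiM UNIV (\<lambda>_. lborel))"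
      by (intro nn_integral_cong)
        (auto simp: prod.distrib indicator_def space_PiM PiE_def extensional_def Pi_iff)
    also have "\<dots> = (\<Prod>i\<in>UNIV. emeasure std_normal_measure (A i))"
      using A by (subst PL.product_nn_integral_prod) (auto simp: emeasure_density)
    finally show "emeasure (density (PiM UNIV (\<lambda>_. lborel))
        (\<lambda>x. \<Prod>i\<in>UNIV. ennreal (std_normal_density (x i)))) (PiE UNIV A)
      = (\<Prod>i\<in>UNIV. emeasure std_normal_measure (A i))" .
  qed simp
qed

lemma std_gaussian_eq_distr_PiM:
  "(std_gaussian :: (real ^ 'n::finite) measure)
     = distr (PiM UNIV (\<lambda>_. std_normal_measure)) borel (\<lambda>x. \<chi> i. x i)"
proof -
  have "std_gaussian = distr (density (PiM UNIV (\<lambda>_. lborel))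
      (\<lambda>x. ennreal (\<Prod>i\<in>UNIV. std_normal_density (x i)))) borel (\<lambda>x::'n \<Rightarrow> real. \<chi> i. x i)"
    unfolding std_gaussian_def lborel_vec_eq_distr_PiM
    by (subst density_distr) (auto intro: measurable_vec_lambda_PiM)
  then show ?thesis
    by (simp add: prod_ennreal[symmetric] density_PiM_lborel_eq_PiM_std_normal)
qed

lemma distr_PiM_std_normal_component:
  assumes "sets M = sets borel"
  shows "distr (PiM (UNIV :: 'n::finite set) (\<lambda>_. std_normal_measure)) M (\<lambda>x. x i) = std_normal_measure"
proof -
  have "distr (PiM (UNIV :: 'n set) (\<lambda>_. std_normal_measure)) M (\<lambda>x. x i)
      = distr (PiM UNIV (\<lambda>_. std_normal_measure)) std_normal_measure (\<lambda>x. x i)"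
    by (rule distr_cong) (auto simp: assms)
  also have "\<dots> = std_normal_measure"
    by (rule distr_PiM_component) (auto intro: prob_space_std_normal_measure)
  finally show ?thesis .
qed

lemma std_normal_coordinate_distributed:
  "distributed (PiM (UNIV :: 'n::finite set) (\<lambda>_. std_normal_measure)) lborel (\<lambda>x. x i) std_normal_density"
proof -
  have "(\<lambda>x. x i) \<in> measurable (PiM (UNIV :: 'n set) (\<lambda>_. std_normal_measure)) std_normal_measure"
    by (rule measurable_component_singleton) simp
  then show ?thesis
    by (simp add: distributed_def distr_PiM_std_normal_component
        measurable_cong_sets[OF refl, of std_normal_measure lborel])
qed

lemma std_normal_coordinates_indep:
  "prob_space.indep_vars (PiM (UNIV :: 'n::finite set) (\<lambda>_. std_normal_measure)) (\<lambda>_. borel) (\<lambda>i x. x i) UNIV"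
proof -
  let ?P = "PiM (UNIV :: 'n set) (\<lambda>_. std_normal_measure)"
  interpret prob_space ?P by (rule prob_space_PiM) (rule prob_space_std_normal_measure)
  have "distr ?P (PiM UNIV (\<lambda>_. borel)) (\<lambda>x. \<lambda>i\<in>UNIV. x i) = ?P"
    by (simp add: restrict_UNIV) (rule distr_id2; rule sets_PiM_cong; simp)
  also have "\<dots> = PiM UNIV (\<lambda>i. distr ?P borel (\<lambda>x. x i))"
    by (simp add: distr_PiM_std_normal_component)
  finally show ?thesis
    using distributed_measurable[OF std_normal_coordinate_distributed]
    by (subst indep_vars_iff_distr_eq_PiM) auto
qed

lemma std_normal_PiM_inner_distributed:
  fixes w :: "real ^ 'n::finite"
  assumes "w \<noteq> 0"
  shows "distributed (PiM UNIV (\<lambda>_. std_normal_measure)) lborel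
           (\<lambda>x. (\<chi> i. x i) \<bullet> w / norm w) std_normal_density"
proof -
  let ?P = "PiM (UNIV :: 'n set) (\<lambda>_. std_normal_measure)"
  interpret prob_space ?P by (rule prob_space_PiM) (rule prob_space_std_normal_measure)
  define I where "I = {i. w $ i \<noteq> 0}"
  define X where "X i x = w $ i * x i" for i and x :: "'n \<Rightarrow> real"
  define Y where "Y x = (\<Sum>i\<in>I. X i x)" for x
  have "I \<noteq> {}" using assms by (auto simp: I_def vec_eq_iff)
  have inner_eq: "(\<chi> i. x i) \<bullet> w = Y x" for x
  proof -
    have "(\<chi> i. x i) \<bullet> w = (\<Sum>i\<in>UNIV. x i * w $ i)" by (simp add: inner_vec_def)
    also have "\<dots> = (\<Sum>i\<in>I. x i * w $ i)" by (rule sum.mono_neutral_right) (auto simp: I_def)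
    finally show ?thesis by (simp add: Y_def X_def mult.commute)
  qed
  have norm_eq: "norm w = sqrt (\<Sum>i\<in>I. \<bar>w $ i\<bar>\<^sup>2)"
  proof -
    have "norm w = sqrt (\<Sum>i\<in>UNIV. \<bar>w $ i\<bar>\<^sup>2)" by (simp add: norm_vec_def L2_set_def)
    also have "(\<Sum>i\<in>UNIV. \<bar>w $ i\<bar>\<^sup>2) = (\<Sum>i\<in>I. \<bar>w $ i\<bar>\<^sup>2)"
      by (rule sum.mono_neutral_right) (auto simp: I_def)
    finally show ?thesis .
  qed
  have indep: "indep_vars (\<lambda>_. borel) X I"
    unfolding X_def by (rule indep_vars_compose2[OF indep_vars_subset[OF std_normal_coordinates_indep]]) auto
  have "distributed ?P lborel (X i) (normal_density 0 \<bar>w $ i\<bar>)" if "i \<in> I" for i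
    using normal_density_affine[OF std_normal_coordinate_distributed[of i], of "w $ i" 0] that
    by (simp add: X_def[abs_def] I_def)
  then have "distributed ?P lborel Y (normal_density 0 (sqrt (\<Sum>i\<in>I. \<bar>w $ i\<bar>\<^sup>2)))"
    using sum_indep_normal[OF _ \<open>I \<noteq> {}\<close> indep, of "\<lambda>i. \<bar>w $ i\<bar>" "\<lambda>_. 0"]
    by (auto simp: Y_def[abs_def] I_def)
  then have "distributed ?P lborel Y (normal_density 0 (norm w))"
    by (simp only: norm_eq)
  then show ?thesis
    using normal_standard_normal_convert[of "norm w" Y 0] assms by (simp add: inner_eq)
qed

lemma std_gaussian_integral_inner:
  fixes w :: "real ^ 'n::finite"
  assumes h: "positively_homogeneous h"
  shows "(\<integral>z. h (z \<bullet> w) \<partial>std_gaussian) = norm w * (\<integral>u. std_normal_density u * h u \<partial>lborel)"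
proof (cases "w = 0")
  case True
  then show ?thesis by (simp add: positively_homogeneous_zero[OF h])
next
  case False
  let ?P = "PiM (UNIV :: 'n set) (\<lambda>_. std_normal_measure)"
  note [measurable] = borel_measurable_positively_homogeneous[OF h]
  have "(\<integral>z. h (z \<bullet> w) \<partial>std_gaussian) = (\<integral>x. h ((\<chi> i. x i) \<bullet> w) \<partial>?P)"
    unfolding std_gaussian_eq_distr_PiM
    by (subst integral_distr[OF measurable_vec_lambda_PiM]) auto
  also have "\<dots> = (\<integral>x. norm w * h ((\<chi> i. x i) \<bullet> w / norm w) \<partial>?P)"
  proof (rule Bochner_Integration.integral_cong[OF refl])
    fix x :: "'n \<Rightarrow> real"
    show "h ((\<chi> i. x i) \<bullet> w) = norm w * h ((\<chi> i. x i) \<bullet> w / norm w)"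
      using h[unfolded positively_homogeneous_def, rule_format, of "norm w" "(\<chi> i. x i) \<bullet> w / norm w"]
        False by simp
  qed
  also have "\<dots> = norm w * (\<integral>u. std_normal_density u * h u \<partial>lborel)"
    by (simp add: distributed_integral[OF std_normal_PiM_inner_distributed[OF False]])
  finally show ?thesis .
qed

lemma integral_std_normal_positively_homogeneous:
  assumes "positively_homogeneous h"
  shows "(\<integral>u. std_normal_density u * h u \<partial>lborel) = (h 1 + h (-1)) / 2 * sqrt (2 / pi)"
proof -
  let ?a = "h 1" and ?b = "h (-1)"
  have integrable:
    "integrable lborel (\<lambda>u. std_normal_density u * u)"
    "integrable lborel (\<lambda>u. std_normal_density u * \<bar>u\<bar>)"
    using integrable_std_normal_moment[of 1] integrable_std_normal_moment_abs[of 1] by simp_all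
  have "(\<integral>u. std_normal_density u * h u \<partial>lborel)
      = (\<integral>u. (?a - ?b) / 2 * (std_normal_density u * u)
             + (?a + ?b) / 2 * (std_normal_density u * \<bar>u\<bar>) \<partial>lborel)"
    by (intro Bochner_Integration.integral_cong refl, subst positively_homogeneous_eq[OF assms])
      (simp add: algebra_simps add_divide_distrib diff_divide_distrib)
  also have "\<dots> = (?a - ?b) / 2 * (\<integral>u. std_normal_density u * u \<partial>lborel)
      + (?a + ?b) / 2 * (\<integral>u. std_normal_density u * \<bar>u\<bar> \<partial>lborel)"
    using integrable by simp
  also have "\<dots> = (?a + ?b) / 2 * sqrt (2 / pi)"
    using integral_std_normal_moment_odd[of 0] integral_std_normal_moment_abs_odd[of 0] by simp
  finally show ?thesis .
qed

lemma exp_act_eq_column_norm: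
  assumes "positively_homogeneous \<sigma>"
  shows "exp_act \<sigma> W j = norm (column j W) * ((\<bar>\<sigma> 1\<bar> + \<bar>\<sigma> (-1)\<bar>) / 2 * sqrt (2 / pi))"
  using std_gaussian_integral_inner[OF positively_homogeneous_abs[OF assms]]
    integral_std_normal_positively_homogeneous[OF positively_homogeneous_abs[OF assms]]
  by (simp add: exp_act_def)

lemma activity_score_eq_column_norm_ratio:
  fixes W :: "real ^ 'b ^ 'a"
  assumes "positively_homogeneous \<sigma>" and "\<exists>t. \<sigma> t \<noteq> 0"
  shows "activity_score \<sigma> W j
    = norm (column j W) / ((1 / real CARD('b)) * (\<Sum>k\<in>UNIV. norm (column k W)))"
proof -
  define C where "C = (\<bar>\<sigma> 1\<bar> + \<bar>\<sigma> (-1)\<bar>) / 2 * sqrt (2 / pi)"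
  have "C \<noteq> 0"
    using positively_homogeneous_nonzero[OF assms] by (auto simp: C_def add_nonneg_eq_0_iff)
  have "activity_score \<sigma> W j
      = norm (column j W) * C / ((1 / real CARD('b)) * (\<Sum>k\<in>UNIV. norm (column k W) * C))"
    unfolding activity_score_def exp_act_eq_column_norm[OF assms(1)] C_def ..
  also have "(\<Sum>k\<in>UNIV. norm (column k W) * C) = (\<Sum>k\<in>UNIV. norm (column k W)) * C"
    by (rule sum_distrib_right[symmetric])
  finally show ?thesis
    using \<open>C \<noteq> 0\<close> by simp
qed

lemma abs_diag_le_frob_norm: "\<bar>M $ j $ j\<bar> \<le> frob_norm (M :: real ^ 'n ^ 'n)"
proof -
  have "(M $ j $ j)\<^sup>2 \<le> (\<Sum>k\<in>UNIV. (M $ j $ k)\<^sup>2)"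
    by (rule member_le_sum) auto
  also have "\<dots> \<le> (\<Sum>i\<in>UNIV. \<Sum>k\<in>UNIV. (M $ i $ k)\<^sup>2)"
    by (rule member_le_sum[where f = "\<lambda>i. \<Sum>k\<in>UNIV. (M $ i $ k)\<^sup>2"]) (auto intro: sum_nonneg)
  finally show ?thesis
    unfolding frob_norm_def by (metis real_sqrt_abs real_sqrt_le_mono)
qed

lemma diag_transpose_mult_self: "(transpose W ** W) $ j $ j = (norm (column j W))\<^sup>2"
  by (simp add: matrix_matrix_mult_def transpose_def column_def power2_norm_eq_inner inner_vec_def)

lemma column_norm_bounds:
  "sqrt (1 - sqrt (DfI W)) \<le> norm (column j W) \<and> norm (column j W) \<le> sqrt (1 + sqrt (DfI W))"
proof -
  have "sqrt (DfI W) = frob_norm (transpose W ** W - mat 1)"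
    by (simp add: DfI_def frob_norm_def sum_nonneg)
  then have "\<bar>(norm (column j W))\<^sup>2 - 1\<bar> \<le> sqrt (DfI W)"
    using abs_diag_le_frob_norm[of "transpose W ** W - mat 1" j]
    by (simp add: diag_transpose_mult_self mat_def)
  then have "sqrt (1 - sqrt (DfI W)) \<le> sqrt ((norm (column j W))\<^sup>2)
      \<and> sqrt ((norm (column j W))\<^sup>2) \<le> sqrt (1 + sqrt (DfI W))"
    by (intro conjI real_sqrt_le_mono) linarith+
  then show ?thesis by simp
qed

lemma ratio_to_mean_bounds:
  fixes n :: "'k::finite \<Rightarrow> real"
  assumes "0 < L" and bounds: "\<And>k. L \<le> n k \<and> n k \<le> U"
  defines "m \<equiv> (1 / real CARD('k)) * (\<Sum>k\<in>UNIV. n k)"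
  shows "L / U \<le> n j / m \<and> n j / m \<le> U / L"
proof -
  have "real CARD('k) * L \<le> (\<Sum>k\<in>UNIV. n k)" "(\<Sum>k\<in>UNIV. n k) \<le> real CARD('k) * U"
    using sum_mono[of UNIV "\<lambda>_. L" n] sum_mono[of UNIV n "\<lambda>_. U"] bounds by auto
  then have "L \<le> m" "m \<le> U"
    by (simp_all add: m_def field_simps)
  then show ?thesis
    using bounds[of j] \<open>0 < L\<close> by (intro conjI frac_le) linarith+
qed

theorem theorem4:
  fixes W :: "real ^ 'b ^ 'a" and \<sigma> :: "real \<Rightarrow> real"
  assumes hom: "\<And>\<alpha> t. \<alpha> \<ge> 0 \<Longrightarrow> \<sigma> (\<alpha> * t) = \<alpha> * \<sigma> t"
    and nonzero: "\<exists>t. \<sigma> t \<noteq> 0"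
    and eps: "sqrt (DfI W) < 1"
  shows "\<forall>j. sqrt ((1 - sqrt (DfI W)) / (1 + sqrt (DfI W))) \<le> activity_score \<sigma> W j
           \<and> activity_score \<sigma> W j \<le> sqrt ((1 + sqrt (DfI W)) / (1 - sqrt (DfI W)))"
proof
  fix j
  have "positively_homogeneous \<sigma>"
    using hom by (simp add: positively_homogeneous_def)
  then have score: "activity_score \<sigma> W j
      = norm (column j W) / ((1 / real CARD('b)) * (\<Sum>k\<in>UNIV. norm (column k W)))"
    using nonzero by (rule activity_score_eq_column_norm_ratio)
  have "0 < sqrt (1 - sqrt (DfI W))"
    using eps by simp
  then have "sqrt (1 - sqrt (DfI W)) / sqrt (1 + sqrt (DfI W)) \<le> activity_score \<sigma> W j
      \<and> activity_score \<sigma> W j \<le> sqrt (1 + sqrt (DfI W)) / sqrt (1 - sqrt (DfI W))"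
    unfolding score by (rule ratio_to_mean_bounds[OF _ column_norm_bounds])
  then show "sqrt ((1 - sqrt (DfI W)) / (1 + sqrt (DfI W))) \<le> activity_score \<sigma> W j
      \<and> activity_score \<sigma> W j \<le> sqrt ((1 + sqrt (DfI W)) / (1 - sqrt (DfI W)))"
    by (simp only: real_sqrt_divide)
qed

end
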